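(* Let $\alpha\in\mathbb{R}$, let $\mathbb{Q}[x]^+_{x=\alpha}=\{p\in\mathbb{Q}[x]: p(\alpha)>0\}$, and suppose $\mathbb{Q}[x]^+_{x=\alpha}=H_1\sqcup H_2$ with $H_1,H_2$ disjoint nonempty subsets, each closed under addition and multiplication. Then: (i) for every integer $i\ge 2$, at least one of $H_1,H_2$ contains both a polynomial of degree $i$ with positive leading coefficient and a polynomial of degree $i$ with negative leading coefficient; (ii) for every integer $N\ge1$ and $j=1,2$, $H_j$ contains a polynomial of degree exactly $N$. *)

theory Defs
  imports "HOL-Computational_Algebra.Polynomial" Complex_Main
begin

definition pos_at :: "real \<Rightarrow> rat poly set" where
  "pos_at \<alpha> = {p. poly (map_poly of_rat p) \<alpha> > 0}"

definition add_mult_closed :: "rat poly set \<Rightarrow> bool" where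
  "add_mult_closed H \<longleftrightarrow> (\<forall>p\<in>H. \<forall>q\<in>H. p + q \<in> H \<and> p * q \<in> H)"

end

theory Submission
  imports Defs
begin

text \<open>A set H closed under sums and products that contains every polynomial of some
  degree N \<ge> 1 positive at \<alpha> contains all of pos_at \<alpha>: a positive polynomial of degree < N
  is the sum of x^N + t/2 - c and -x^N + t/2 + c for a rational c close to \<alpha>^N, and one of
  degree \<ge> 2 is (x - r) f + g with r < \<alpha> rational, f, g positive at \<alpha>, f of smaller degree
  and g of degree \<le> 1. So neither part can miss a degree N \<ge> 1, which is (ii).
  For (i), suppose that in degree i one part A has no negative and the other part B no positive
  leading coefficient. A positive linear l1 with leading coefficient 1 lies in A, since l1^i
  would violate the sign condition in B; a positive linear l2 with leading coefficient -1 lies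
  in B, since l1^(i-1) l2 would violate it in A; and a positive q of degree i - 1 with leading
  coefficient -1 makes q l1 or q l2 violate it.\<close>

lemma map_poly_of_rat_add [simp]:
  "map_poly (of_rat :: rat \<Rightarrow> 'a::field_char_0) (p + q) = map_poly of_rat p + map_poly of_rat q"
  by (intro poly_eqI) (simp add: coeff_map_poly of_rat_add)

lemma map_poly_of_rat_diff [simp]:
  "map_poly (of_rat :: rat \<Rightarrow> 'a::field_char_0) (p - q) = map_poly of_rat p - map_poly of_rat q"
  by (intro poly_eqI) (simp add: coeff_map_poly of_rat_diff)

lemma map_poly_of_rat_smult [simp]:
  "map_poly (of_rat :: rat \<Rightarrow> 'a::field_char_0) (smult c p) = smult (of_rat c) (map_poly of_rat p)"
  by (simp add: map_poly_smult of_rat_mult)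

lemma map_poly_of_rat_pCons [simp]:
  "map_poly (of_rat :: rat \<Rightarrow> 'a::field_char_0) (pCons c p) = pCons (of_rat c) (map_poly of_rat p)"
  by (simp add: map_poly_pCons)

lemma map_poly_of_rat_monom [simp]:
  "map_poly (of_rat :: rat \<Rightarrow> 'a::field_char_0) (monom c n) = monom (of_rat c) n"
  by (simp add: map_poly_monom)

lemma map_poly_of_rat_mult [simp]:
  "map_poly (of_rat :: rat \<Rightarrow> 'a::field_char_0) (p * q) = map_poly of_rat p * map_poly of_rat q"
  by (induction p) simp_all

lemma pos_at_iff: "p \<in> pos_at \<alpha> \<longleftrightarrow> poly (map_poly of_rat p) \<alpha> > 0"
  by (simp add: pos_at_def)

lemma add_mult_closedD:
  assumes "add_mult_closed H" "p \<in> H" "q \<in> H"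
  shows "p + q \<in> H" "p * q \<in> H"
  using assms by (simp_all add: add_mult_closed_def)

lemma add_mult_closed_power:
  assumes "add_mult_closed H" "p \<in> H" "0 < n"
  shows "p ^ n \<in> H"
  using \<open>0 < n\<close>
proof (induction n rule: nat_induct_non_zero)
  case (Suc n)
  then show ?case using assms add_mult_closedD(2)[of H p "p ^ n"] by simp
qed (use assms in simp)

lemma pos_at_exists_degree_lead_coeff:
  fixes c :: rat
  assumes "0 < m" "c \<noteq> 0"
  obtains p where "p \<in> pos_at \<alpha>" "degree p = m" "lead_coeff p = c"
proof -
  obtain K :: rat where K: "\<bar>of_rat c * \<alpha> ^ m\<bar> < of_rat K"
    using of_rat_dense[of "\<bar>of_rat c * \<alpha> ^ m\<bar>" "\<bar>of_rat c * \<alpha> ^ m\<bar> + 1"] by auto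
  define p where "p = [:K:] + monom c m"
  have deg: "degree p = m"
    unfolding p_def using assms by (subst degree_add_eq_right) (auto simp: degree_monom_eq)
  show ?thesis
  proof (rule that)
    show "p \<in> pos_at \<alpha>"
      using K by (simp add: p_def pos_at_iff poly_monom)
    show "lead_coeff p = c"
      unfolding deg using \<open>0 < m\<close> by (cases m) (simp_all add: p_def)
  qed (fact deg)
qed

lemma pos_at_sum_of_two_of_degree:
  assumes t: "t \<in> pos_at \<alpha>" and "degree t < N"
  obtains s1 s2 where "s1 \<in> pos_at \<alpha>" "s2 \<in> pos_at \<alpha>" "degree s1 = N" "degree s2 = N"
    "t = s1 + s2"
proof -
  define T where "T = poly (map_poly of_rat t) \<alpha>"
  have "T > 0" using t by (simp add: pos_at_iff T_def)
  then obtain c :: rat where c: "\<alpha> ^ N - T / 2 < of_rat c" "of_rat c < \<alpha> ^ N + T / 2"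
    using of_rat_dense[of "\<alpha> ^ N - T / 2" "\<alpha> ^ N + T / 2"] by auto
  define s1 where "s1 = monom 1 N + (smult (1/2) t - [:c:])"
  define s2 where "s2 = monom (-1) N + (smult (1/2) t + [:c:])"
  show ?thesis
  proof (rule that)
    show "s1 \<in> pos_at \<alpha>" "s2 \<in> pos_at \<alpha>"
      using c by (simp_all add: s1_def s2_def pos_at_iff poly_monom T_def[symmetric] of_rat_divide)
    have "degree (smult (1/2) t - [:c:]) < N" "degree (smult (1/2) t + [:c:]) < N"
      using \<open>degree t < N\<close> degree_diff_le_max[of "smult (1/2) t" "[:c:]"]
        degree_add_le_max[of "smult (1/2) t" "[:c:]"] by auto
    then show "degree s1 = N" "degree s2 = N"
      by (simp_all add: s1_def s2_def degree_add_eq_left degree_monom_eq)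
    have "s1 + s2 = smult (1/2 + 1/2) t"
      unfolding s1_def s2_def smult_add_left by (simp add: algebra_simps add_monom)
    then show "t = s1 + s2" by simp
  qed
qed

lemma pos_at_linear_decomposition:
  assumes t: "t \<in> pos_at \<alpha>" and "0 < degree t"
  obtains l f g where "l \<in> pos_at \<alpha>" "degree l \<le> 1" "f \<in> pos_at \<alpha>" "degree f < degree t"
    "g \<in> pos_at \<alpha>" "degree g \<le> 1" "t = l * f + g"
proof -
  obtain r :: rat where r: "of_rat r < \<alpha>"
    using of_rat_dense[of "\<alpha> - 1" \<alpha>] by auto
  define l where "l = [:-r, 1:]"
  define q where "q = synthetic_div t r"
  define c where "c = poly t r"
  have t_eq: "t = l * q + [:c:]"
    unfolding l_def q_def c_def by (rule synthetic_div_correct'[symmetric])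
  define L where "L = \<alpha> - of_rat r"
  define Q where "Q = poly (map_poly of_rat q) \<alpha>"
  have "L > 0" using r by (simp add: L_def)
  have ev_l: "poly (map_poly of_rat l) \<alpha> = L" by (simp add: l_def L_def of_rat_minus)
  have "L * Q + of_rat c > 0"
    using t by (subst (asm) t_eq) (simp add: pos_at_iff ev_l Q_def)
  then have "- Q < of_rat c / L" using \<open>L > 0\<close> by (simp add: field_simps)
  then obtain K :: rat where K: "- Q < of_rat K" "of_rat K < of_rat c / L"
    using of_rat_dense by blast
  show ?thesis
  proof (rule that)
    show "l \<in> pos_at \<alpha>" "degree l \<le> 1"
      using \<open>L > 0\<close> by (simp_all add: pos_at_iff ev_l) (simp add: l_def)
    show "q + [:K:] \<in> pos_at \<alpha>" using K by (simp add: pos_at_iff Q_def)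
    show "degree (q + [:K:]) < degree t"
      using \<open>0 < degree t\<close> degree_add_le_max[of q "[:K:]"] by (simp add: q_def degree_synthetic_div)
    have "of_rat K * L < of_rat c" using K \<open>L > 0\<close> by (simp add: field_simps)
    then show "[:c:] - smult K l \<in> pos_at \<alpha>" by (simp add: pos_at_iff ev_l)
    show "degree ([:c:] - smult K l) \<le> 1"
      using degree_diff_le_max[of "[:c:]" "smult K l"] by (simp add: l_def)
    show "t = l * (q + [:K:]) + ([:c:] - smult K l)"
      by (subst t_eq) (simp add: algebra_simps)
  qed
qed

lemma pos_at_subset_if_contains_linear:
  assumes closed: "add_mult_closed H"
    and linear: "\<And>p. p \<in> pos_at \<alpha> \<Longrightarrow> degree p \<le> 1 \<Longrightarrow> p \<in> H"
  shows "pos_at \<alpha> \<subseteq> H"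
proof
  fix t assume "t \<in> pos_at \<alpha>"
  then show "t \<in> H"
  proof (induction "degree t" arbitrary: t rule: less_induct)
    case less
    show ?case
    proof (cases "degree t \<le> 1")
      case True
      then show ?thesis using linear less.prems by blast
    next
      case False
      then obtain l f g where l: "l \<in> pos_at \<alpha>" "degree l \<le> 1"
        and f: "f \<in> pos_at \<alpha>" "degree f < degree t"
        and g: "g \<in> pos_at \<alpha>" "degree g \<le> 1" and t: "t = l * f + g"
        using pos_at_linear_decomposition[OF less.prems] by auto
      have "l \<in> H" "g \<in> H" using linear l g by blast+
      moreover have "f \<in> H" using less.hyps f by blast
      ultimately show ?thesis unfolding t using closed by (intro add_mult_closedD)
    qed
  qed
qed

lemma pos_at_subset_if_contains_degree:
  assumes closed: "add_mult_closed H" and "0 < N"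
    and degree_N: "\<And>p. p \<in> pos_at \<alpha> \<Longrightarrow> degree p = N \<Longrightarrow> p \<in> H"
  shows "pos_at \<alpha> \<subseteq> H"
proof (rule pos_at_subset_if_contains_linear[OF closed])
  fix t assume t: "t \<in> pos_at \<alpha>" "degree t \<le> 1"
  show "t \<in> H"
  proof (cases "degree t = N")
    case True
    then show ?thesis using degree_N t by blast
  next
    case False
    with t \<open>0 < N\<close> have "degree t < N" by linarith
    with t(1) obtain s1 s2 where "s1 \<in> pos_at \<alpha>" "s2 \<in> pos_at \<alpha>" "degree s1 = N"
      "degree s2 = N" and "t = s1 + s2"
      by (rule pos_at_sum_of_two_of_degree)
    then show ?thesis using closed degree_N by (simp add: add_mult_closedD(1))
  qed
qed

lemma pos_at_partition_has_degree:
  assumes "pos_at \<alpha> = H1 \<union> H2" "H1 \<inter> H2 = {}" "H1 \<noteq> {}" "add_mult_closed H2" "0 < N"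
  shows "\<exists>p\<in>H1. degree p = N"
proof (rule ccontr)
  assume "\<not> ?thesis"
  with assms(1) have "pos_at \<alpha> \<subseteq> H2"
    by (intro pos_at_subset_if_contains_degree[OF assms(4,5)]) auto
  with assms(1-3) show False by auto
qed

lemma pos_at_partition_not_sign_separated:
  assumes partition: "pos_at \<alpha> = A \<union> B" and closed: "add_mult_closed A" "add_mult_closed B"
    and "2 \<le> i"
    and A_nonneg: "\<And>p. p \<in> A \<Longrightarrow> degree p = i \<Longrightarrow> lead_coeff p \<ge> 0"
    and B_nonpos: "\<And>p. p \<in> B \<Longrightarrow> degree p = i \<Longrightarrow> lead_coeff p \<le> 0"
  shows False
proof -
  obtain l1 where l1: "l1 \<in> pos_at \<alpha>" "degree l1 = 1" "lead_coeff l1 = 1"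
    by (rule pos_at_exists_degree_lead_coeff[of 1 1]) auto
  obtain l2 where l2: "l2 \<in> pos_at \<alpha>" "degree l2 = 1" "lead_coeff l2 = -1"
    by (rule pos_at_exists_degree_lead_coeff[of 1 "-1"]) auto
  obtain q where q: "q \<in> pos_at \<alpha>" "degree q = i - 1" "lead_coeff q = -1"
    by (rule pos_at_exists_degree_lead_coeff[of "i - 1" "-1"]) (use \<open>2 \<le> i\<close> in auto)
  have nonzero: "l1 \<noteq> 0" "l2 \<noteq> 0" "q \<noteq> 0" using l1 l2 q by auto
  have "l1 \<notin> B"
  proof
    assume "l1 \<in> B"
    then have "l1 ^ i \<in> B" using closed \<open>2 \<le> i\<close> by (intro add_mult_closed_power) auto
    moreover have "degree (l1 ^ i) = i" "lead_coeff (l1 ^ i) = 1"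
      unfolding lead_coeff_power using l1 nonzero by (simp_all add: degree_power_eq)
    ultimately show False using B_nonpos by force
  qed
  then have "l1 \<in> A" using l1 partition by auto
  have "l2 \<notin> A"
  proof
    assume "l2 \<in> A"
    then have "l1 ^ (i - 1) * l2 \<in> A"
      using \<open>l1 \<in> A\<close> closed \<open>2 \<le> i\<close> by (intro add_mult_closedD add_mult_closed_power) auto
    moreover have "degree (l1 ^ (i - 1) * l2) = i" "lead_coeff (l1 ^ (i - 1) * l2) = -1"
      unfolding lead_coeff_mult lead_coeff_power using l1 l2 nonzero \<open>2 \<le> i\<close>
      by (simp_all add: degree_mult_eq degree_power_eq)
    ultimately show False using A_nonneg by force
  qed
  then have "l2 \<in> B" using l2 partition by auto
  have "degree (q * l1) = i" "lead_coeff (q * l1) = -1"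
       "degree (q * l2) = i" "lead_coeff (q * l2) = 1"
    unfolding lead_coeff_mult using l1 l2 q nonzero \<open>2 \<le> i\<close> by (simp_all add: degree_mult_eq)
  moreover have "q \<in> A \<or> q \<in> B" using q partition by auto
  then have "q * l1 \<in> A \<or> q * l2 \<in> B"
    using closed \<open>l1 \<in> A\<close> \<open>l2 \<in> B\<close> add_mult_closedD(2) by blast
  ultimately show False using A_nonneg B_nonpos by force
qed

lemma pos_at_partition_has_both_signs:
  assumes partition: "pos_at \<alpha> = H1 \<union> H2"
    and closed: "add_mult_closed H1" "add_mult_closed H2" and "2 \<le> i"
  shows "\<exists>H \<in> {H1, H2}. (\<exists>p\<in>H. degree p = i \<and> lead_coeff p > 0)
                        \<and> (\<exists>q\<in>H. degree q = i \<and> lead_coeff q < 0)"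
proof (rule ccontr)
  define pos where "pos H \<longleftrightarrow> (\<exists>p\<in>H. degree p = i \<and> lead_coeff p > 0)" for H :: "rat poly set"
  define neg where "neg H \<longleftrightarrow> (\<exists>p\<in>H. degree p = i \<and> lead_coeff p < 0)" for H :: "rat poly set"
  assume "\<not> ?thesis"
  then have one_sign: "\<not> (pos H1 \<and> neg H1)" "\<not> (pos H2 \<and> neg H2)"
    by (auto simp: pos_def neg_def)
  obtain p where p: "p \<in> pos_at \<alpha>" "degree p = i" "lead_coeff p = 1"
    by (rule pos_at_exists_degree_lead_coeff[of i 1]) (use \<open>2 \<le> i\<close> in auto)
  obtain q where q: "q \<in> pos_at \<alpha>" "degree q = i" "lead_coeff q = -1"
    by (rule pos_at_exists_degree_lead_coeff[of i "-1"]) (use \<open>2 \<le> i\<close> in auto)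
  have separated: False
    if AB: "pos_at \<alpha> = A \<union> B" "add_mult_closed A" "add_mult_closed B"
      and one_sign_AB: "\<not> (pos A \<and> neg A)" "\<not> (pos B \<and> neg B)" and "p \<in> A" for A B
  proof (rule pos_at_partition_not_sign_separated[OF AB \<open>2 \<le> i\<close>])
    have "pos A" using \<open>p \<in> A\<close> p by (auto simp: pos_def)
    with one_sign_AB have "\<not> neg A" "\<not> pos B" "neg B"
      using q AB(1) by (auto simp: neg_def)
    then show "lead_coeff r \<ge> 0" if "r \<in> A" "degree r = i" for r
      using that by (auto simp: neg_def not_less)
    from \<open>\<not> pos B\<close> show "lead_coeff r \<le> 0" if "r \<in> B" "degree r = i" for r
      using that by (auto simp: pos_def not_less)
  qed
  show False
  proof (cases "p \<in> H1")
    case True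
    then show False using separated[OF partition closed one_sign] by blast
  next
    case False
    with p partition have "p \<in> H2" by auto
    moreover have "pos_at \<alpha> = H2 \<union> H1" using partition by auto
    ultimately show False using separated closed one_sign by blast
  qed
qed

theorem lemma4p4:
  fixes \<alpha> :: real and H1 H2 :: "rat poly set"
  assumes "pos_at \<alpha> = H1 \<union> H2"
    and "H1 \<inter> H2 = {}"
    and "H1 \<noteq> {}" and "H2 \<noteq> {}"
    and "add_mult_closed H1" and "add_mult_closed H2"
  shows "(\<forall>i::nat. i \<ge> 2 \<longrightarrow>
            (\<exists>H \<in> {H1, H2}. (\<exists>p\<in>H. degree p = i \<and> lead_coeff p > 0)
                          \<and> (\<exists>q\<in>H. degree q = i \<and> lead_coeff q < 0)))
       \<and> (\<forall>N::nat. N \<ge> 1 \<longrightarrow> (\<exists>p\<in>H1. degree p = N) \<and> (\<exists>p\<in>H2. degree p = N))"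
proof (intro conjI allI impI)
  fix i :: nat assume "i \<ge> 2"
  with assms(1,5,6) show "\<exists>H \<in> {H1, H2}. (\<exists>p\<in>H. degree p = i \<and> lead_coeff p > 0)
                                      \<and> (\<exists>q\<in>H. degree q = i \<and> lead_coeff q < 0)"
    by (rule pos_at_partition_has_both_signs)
next
  fix N :: nat assume "N \<ge> 1"
  then have "0 < N" by simp
  show "\<exists>p\<in>H1. degree p = N"
    using pos_at_partition_has_degree[OF assms(1-3,6) \<open>0 < N\<close>] .
  have "pos_at \<alpha> = H2 \<union> H1" "H2 \<inter> H1 = {}" using assms(1,2) by auto
  then show "\<exists>p\<in>H2. degree p = N"
    using pos_at_partition_has_degree[OF _ _ assms(4,5) \<open>0 < N\<close>] by blast
qed

end
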